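(* Let $\tau_\mathsf{I} \geq 0$ and $\tau_\mathsf{D} \in [0,1)$ be real numbers and define $$\delta_\mathsf{ID}(\tau_\mathsf{I},\tau_\mathsf{D}) = \frac{\tau_\mathsf{I}+\tau_\mathsf{D}(1-\tau_\mathsf{D})}{\tau_\mathsf{I}+1-\tau_\mathsf{D}} = 1 - \frac{(1-\tau_\mathsf{D})^2}{\tau_\mathsf{I}+1-\tau_\mathsf{D}}.$$ Let $C\subseteq\Sigma^n$ (with $\Sigma$ a finite alphabet and $|C|\ge 2$) be a code of minimum Levenshtein distance $d = 2\delta n$ with $\delta > \delta_\mathsf{ID}(\tau_\mathsf{I},\tau_\mathsf{D})$, and put $\gamma = \delta - \delta_\mathsf{ID}(\tau_\mathsf{I},\tau_\mathsf{D})>0$. Then $C$ is $(\lfloor\tau_\mathsf{I} n\rfloor, \lfloor\tau_\mathsf{D} n\rfloor, \ell)$-list decodable for $$\ell = \left\lfloor \frac{\delta(\tau_\mathsf{I}+1)}{\gamma\,(\tau_\mathsf{I} + 1-\tau_\mathsf{D})}\right\rfloor.$$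
   Context: For words $x,y$ over $\Sigma$, the Levenshtein distance $d_\mathsf{L}(x,y)$ is the minimum number of single-symbol insertions and deletions needed to transform $x$ into $y$; the minimum Levenshtein distance of a code $C$ is $\min\{d_\mathsf{L}(c_1,c_2): c_1\neq c_2 \in C\}$. For a word $v$ and non-negative integers $a,b$, $B_\mathsf{L}(v,a,b)$ is the set of words obtainable from $v$ by at most $a$ insertions and at most $b$ deletions. A code $C\subseteq \Sigma^n$ is $(t_\mathsf{I},t_\mathsf{D},\ell)$-list decodable if $|B_\mathsf{L}(v,t_\mathsf{D},t_\mathsf{I})\cap C|\le \ell$ for every word $v$ over $\Sigma$ (of any length). *)

theory Defs
  imports Complex_Main
begin

inductive ins_del :: "nat \<Rightarrow> nat \<Rightarrow> 'a list \<Rightarrow> 'a list \<Rightarrow> bool" where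
  refl: "ins_del 0 0 x x"
| ins: "ins_del i j x (u @ v) \<Longrightarrow> ins_del (Suc i) j x (u @ c # v)"
| del: "ins_del i j x (u @ c # v) \<Longrightarrow> ins_del i (Suc j) x (u @ v)"

definition lev_dist :: "'a list \<Rightarrow> 'a list \<Rightarrow> nat" where
  "lev_dist x y = (LEAST k. \<exists>i j. i + j = k \<and> ins_del i j x y)"

definition min_lev_dist :: "'a list set \<Rightarrow> nat" where
  "min_lev_dist C = Min {lev_dist c1 c2 | c1 c2. c1 \<in> C \<and> c2 \<in> C \<and> c1 \<noteq> c2}"

definition lev_ball :: "'a list \<Rightarrow> nat \<Rightarrow> nat \<Rightarrow> 'a list set" where
  "lev_ball v a b = {w. \<exists>i j. i \<le> a \<and> j \<le> b \<and> ins_del i j v w}"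

definition list_decodable :: "'a list set \<Rightarrow> nat \<Rightarrow> nat \<Rightarrow> nat \<Rightarrow> bool" where
  "list_decodable C tI tD l \<longleftrightarrow> (\<forall>v. card (lev_ball v tD tI \<inter> C) \<le> l)"

definition delta_ID :: "real \<Rightarrow> real \<Rightarrow> real" where
  "delta_ID tauI tauD = (tauI + tauD * (1 - tauD)) / (tauI + 1 - tauD)"

end

theory Submission
  imports Defs "HOL-Library.Sublist"
begin

text \<open>Every codeword c within the decoding radius of a received word v shares with v a common
  subsequence; record it as a set S_c of positions of v. The insertion/deletion budget forces every
  S_c to be large, while the minimum distance forces any two of them to have a small intersection,
  since positions shared by S_c and S_c' give a common subsequence of c and c'. Counting, for each
  position x of v, the number r(x) of sets S_c containing x, the inequality
  \<Sum>x (r(x) - \<lambda>)^2 \<ge> 0 turns these two estimates into a Johnson-type bound on the number of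
  sets; after choosing \<lambda> optimally, the bound is weakest when every S_c has the smallest
  admissible size, which gives the stated list size.\<close>

lemma ins_del_length: "ins_del i j x y \<Longrightarrow> length x + i = length y + j"
  by (induction rule: ins_del.induct) auto

lemma ins_del_trans:
  assumes "ins_del i j x y" and "ins_del i' j' y z"
  shows "ins_del (i + i') (j + j') x z"
  using assms(2,1)
proof (induction rule: ins_del.induct)
  case refl
  then show ?case by simp
next
  case ins
  then show ?case using ins_del.ins by fastforce
next
  case del
  then show ?case using ins_del.del by fastforce
qed

lemma ins_del_Cons: "ins_del i j x y \<Longrightarrow> ins_del i j (a # x) (a # y)"
proof (induction rule: ins_del.induct)
  case (refl x)
  show ?case by (rule ins_del.refl)
next
  case (ins i j x u v c)
  then show ?case using ins_del.ins[of i j "a # x" "a # u" v c] by simp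
next
  case (del i j x u c v)
  then show ?case using ins_del.del[of i j "a # x" "a # u" c v] by simp
qed

lemma ins_del_delete_one: "ins_del 0 1 (u @ c # v) (u @ v)"
  using ins_del.del[OF ins_del.refl] by simp

lemma ins_del_insert_one: "ins_del 1 0 (u @ v) (u @ c # v)"
  using ins_del.ins[OF ins_del.refl] by simp

lemma ins_del_sym: "ins_del i j x y \<Longrightarrow> ins_del j i y x"
proof (induction rule: ins_del.induct)
  case (refl x)
  show ?case by (rule ins_del.refl)
next
  case (ins i j x u v c)
  from ins_del_trans[OF ins_del_delete_one ins.IH] show ?case by simp
next
  case (del i j x u c v)
  from ins_del_trans[OF ins_del_insert_one del.IH] show ?case by simp
qed

lemma ins_del_Nil: "ins_del 0 (length x) x []"
proof (induction x)
  case Nil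
  show ?case by (simp add: ins_del.refl)
next
  case (Cons a x)
  from ins_del_trans[OF ins_del_delete_one[of "[]" a x, simplified] Cons.IH] show ?case by simp
qed

lemma ins_del_of_subseq: "subseq w x \<Longrightarrow> ins_del 0 (length x - length w) x w"
proof (induction rule: list_emb.induct)
  case (list_emb_Nil x)
  show ?case using ins_del_Nil by simp
next
  case (list_emb_Cons w x a)
  have "length w \<le> length x" using list_emb_Cons.hyps by (rule list_emb_length)
  with ins_del_trans[OF ins_del_delete_one[of "[]" a x, simplified] list_emb_Cons.IH] show ?case
    by (simp add: Suc_diff_le)
next
  case (list_emb_Cons2 a b w x)
  then show ?case by (simp add: ins_del_Cons)
qed

lemma subseq_delete_one:
  assumes "subseq w (u @ c # v)"
  obtains w' where "subseq w' w" "subseq w' (u @ v)" "length w \<le> Suc (length w')"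
proof -
  from assms obtain w1 w2 where w: "w = w1 @ w2" "subseq w1 u" "subseq w2 (c # v)"
    by (rule subseq_appendE)
  show thesis
  proof (cases "subseq w2 v")
    case True
    with w show thesis by (intro that[of w]) (auto intro: list_emb_append_mono)
  next
    case False
    with w(3) obtain w2' where "w2 = c # w2'" "subseq w2' v"
      by (cases w2) (auto split: if_splits)
    with w show thesis by (intro that[of "w1 @ w2'"]) (auto intro: list_emb_append_mono)
  qed
qed

lemma ins_del_common_subseq:
  "ins_del i j x y \<Longrightarrow> \<exists>w. subseq w x \<and> subseq w y \<and> length x \<le> length w + j"
proof (induction rule: ins_del.induct)
  case (refl x)
  show ?case by auto
next
  case (ins i j x u v c)
  moreover have "subseq (u @ v) (u @ c # v)" by (auto intro: list_emb_append_mono)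
  ultimately show ?case by (meson subseq_order.trans)
next
  case (del i j x u c v)
  then obtain w where w: "subseq w x" "subseq w (u @ c # v)" "length x \<le> length w + j"
    by blast
  obtain w' where "subseq w' w" "subseq w' (u @ v)" "length w \<le> Suc (length w')"
    using subseq_delete_one[OF w(2)] .
  with w show ?case by (intro exI[of _ w']) (auto intro: subseq_order.trans)
qed

lemma lev_dist_le_common_subseq:
  assumes "subseq w x" and "subseq w y"
  shows "lev_dist x y \<le> (length x - length w) + (length y - length w)"
proof -
  have "ins_del (length y - length w) (length x - length w) x y"
    using ins_del_trans[OF ins_del_of_subseq[OF assms(1)] ins_del_sym[OF ins_del_of_subseq[OF assms(2)]]]
    by simp
  then show ?thesis
    unfolding lev_dist_def by (intro Least_le) (metis add.commute)
qed

lemma subseq_nths_nths: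
  "{i \<in> A. i < length xs} \<subseteq> B \<Longrightarrow> subseq (nths xs A) (nths xs B)"
proof (induction xs arbitrary: A B)
  case Nil
  show ?case by simp
next
  case (Cons a xs)
  have "subseq (nths xs {j. Suc j \<in> A}) (nths xs {j. Suc j \<in> B})"
    using Cons.prems by (intro Cons.IH) auto
  moreover have "0 \<in> A \<Longrightarrow> 0 \<in> B" using Cons.prems by auto
  ultimately show ?case by (auto simp: nths_Cons)
qed

lemma ins_del_positions:
  assumes "ins_del i j v c"
  obtains S where "S \<subseteq> {..<length v}" "subseq (nths v S) c" "length v \<le> card S + j"
proof -
  from ins_del_common_subseq[OF assms] obtain w
    where w: "subseq w v" "subseq w c" "length v \<le> length w + j" by blast
  from w(1) obtain N where N: "w = nths v N" by (auto simp: subseq_conv_nths)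
  \<comment> \<open>\<open>nths\<close> ignores indices beyond the length, so \<open>N\<close> is cut down to genuine positions of \<open>v\<close>.\<close>
  define S where "S = {k. k < length v \<and> k \<in> N}"
  have "card S = length w" unfolding S_def N by (simp add: length_nths)
  moreover have "subseq (nths v S) w" unfolding N by (rule subseq_nths_nths) (auto simp: S_def)
  ultimately show thesis using w by (intro that[of S]) (auto simp: S_def intro: subseq_order.trans)
qed

lemma min_lev_dist_le:
  assumes "finite C" "c \<in> C" "c' \<in> C" "c \<noteq> c'"
  shows "min_lev_dist C \<le> lev_dist c c'"
  unfolding min_lev_dist_def
proof (rule Min_le)
  have "{lev_dist c1 c2 | c1 c2. c1 \<in> C \<and> c2 \<in> C \<and> c1 \<noteq> c2}
          \<subseteq> (\<lambda>(c1, c2). lev_dist c1 c2) ` (C \<times> C)"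
    by auto
  then show "finite {lev_dist c1 c2 | c1 c2. c1 \<in> C \<and> c2 \<in> C \<and> c1 \<noteq> c2}"
    using assms(1) by (meson finite_SigmaI finite_imageI finite_subset)
qed (use assms in blast)

lemma lev_dist_add_card_inter_le:
  assumes "S \<subseteq> {..<length v}" "subseq (nths v S) c" "subseq (nths v S') c'"
    and "length c = n" "length c' = n"
  shows "lev_dist c c' + 2 * card (S \<inter> S') \<le> 2 * n"
proof -
  define w where "w = nths v (S \<inter> S')"
  have "subseq w c"
    using subseq_nths_nths[of "S \<inter> S'" v S] assms(2) by (auto simp: w_def intro: subseq_order.trans)
  moreover have "subseq w c'"
    using subseq_nths_nths[of "S \<inter> S'" v S'] assms(3) by (auto simp: w_def intro: subseq_order.trans)
  moreover have "{i. i < length v \<and> i \<in> S \<inter> S'} = S \<inter> S'" using assms(1) by auto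
  then have "length w = card (S \<inter> S')" by (simp add: w_def length_nths)
  ultimately show ?thesis
    using lev_dist_le_common_subseq[of w c c'] list_emb_length[of "(=)" w c] assms(4,5) by simp
qed

lemma lev_ball_positions:
  assumes "c \<in> lev_ball v tD tI"
  obtains S where "S \<subseteq> {..<length v}" "subseq (nths v S) c"
    "length c \<le> card S + tD" "length v \<le> card S + tI"
proof -
  from assms obtain i j where "i \<le> tD" "j \<le> tI" "ins_del i j v c"
    unfolding lev_ball_def by blast
  with ins_del_length[OF \<open>ins_del i j v c\<close>] show thesis
    by (elim ins_del_positions) (auto intro: that)
qed

lemma less_of_sq_sub_pos:
  fixes a t D :: real
  assumes "0 < t" "0 \<le> a" "0 \<le> D" "0 < t\<^sup>2 - D * (a + t)"
  shows "D < t"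
proof -
  have "D * t \<le> D * (a + t)" using assms by (simp add: mult_left_mono)
  then have "D * t < t * t" using assms(4) by (simp add: power2_eq_square)
  then show ?thesis using assms(1) by simp
qed

text \<open>The list-size bound obtained for sets of normalised size \<open>s\<close> is weakest at the minimal size \<open>s = t\<close>.\<close>

lemma johnson_ratio_bound:
  fixes a t D s :: real
  assumes "0 < t" "t \<le> 1" "0 \<le> a" "0 \<le> D" "0 < t\<^sup>2 - D * (a + t)" "t \<le> s"
  shows "(s - D) * (s + a) * (t\<^sup>2 - D * (a + t)) \<le> (1 - D) * (1 + a) * (s\<^sup>2 - D * (s + a))"
proof -
  define G where "G = t\<^sup>2 - D * (a + t)"
  define P where "P = (1 - D) * (1 + a) - G"
  define F where "F = (\<lambda>x. (1 - D) * (1 + a) * (x\<^sup>2 - D * (x + a)) - (x - D) * (x + a) * G)"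
  have G_pos: "0 < G" using assms(5) by (simp add: G_def)
  have "D < t" using assms(1,3,4,5) by (rule less_of_sq_sub_pos)
  have P_eq: "P = a + (1 - t) * (1 + t - D)"
    unfolding P_def G_def by (simp add: algebra_simps power2_eq_square)
  have "t \<le> 2 * t - D - G"
  proof -
    have "D * (1 - t) \<le> t * (1 - t)" using \<open>D < t\<close> assms by (simp add: mult_right_mono)
    moreover have "0 \<le> D * a" using assms by simp
    ultimately show ?thesis unfolding G_def by (simp add: algebra_simps power2_eq_square)
  qed
  then have "0 \<le> a * (2 * t - D - G) + (2 * t - D) * (1 - t) * (1 + t - D)"
    using assms \<open>D < t\<close> by (intro add_nonneg_nonneg) auto
  also have "\<dots> = (2 * t - D) * P - G * a"
    unfolding P_eq G_def by (simp add: algebra_simps power2_eq_square)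
  also have "\<dots> \<le> (2 * t - D) * P - G * a + P * (s - t)"
    using assms \<open>D < t\<close> by (simp add: P_eq)
  also have "\<dots> = P * (s + t) - D * (1 - D) * (1 + a) - G * (a - D)"
    by (simp add: P_def algebra_simps)
  finally have "0 \<le> (s - t) * (P * (s + t) - D * (1 - D) * (1 + a) - G * (a - D))"
    using assms(6) by simp
  also have "\<dots> = F s - F t"
    by (simp add: F_def P_def algebra_simps power2_eq_square)
  finally have "F t \<le> F s" by simp
  have "(t - D) * (t + a) \<le> (1 - D) * (1 + a)"
    using assms \<open>D < t\<close> by (intro mult_mono) auto
  moreover have "F t = G * ((1 - D) * (1 + a) - (t - D) * (t + a))"
    unfolding F_def G_def by (simp add: algebra_simps)
  ultimately have "0 \<le> F t"
    using G_pos by simp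
  with \<open>F t \<le> F s\<close> show ?thesis unfolding F_def G_def by simp
qed

lemma insertion_rate_le_of_bound_violated:
  fixes a t D L :: real
  assumes "0 < t" "t \<le> 1" "0 \<le> a" "0 \<le> D" "0 < t\<^sup>2 - D * (a + t)" "1 \<le> L"
    and large: "(1 - D) * (1 + a) < L * (t\<^sup>2 - D * (a + t))"
  shows "a \<le> (2 * L - 1) * t"
proof (rule ccontr)
  assume "\<not> ?thesis"
  moreover have "L * t \<le> (2 * L - 1) * t" using assms by (intro mult_right_mono) auto
  ultimately have "L * t < a" by linarith
  have "(1 - D) * (a + t) > a"
  proof -
    have "t\<^sup>2 \<le> t" using assms by (simp add: power2_eq_square mult_left_le)
    then show ?thesis using assms(5) by (simp add: algebra_simps)
  qed
  have "L * (t\<^sup>2 - D * (a + t)) \<le> L * t\<^sup>2" using assms by (simp add: mult_left_mono)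
  with large have "(1 - D) * (1 + a) < L * t\<^sup>2" by linarith
  then have "(1 - D) * (1 + a) * (a + t) < L * t\<^sup>2 * (a + t)"
    using assms by (intro mult_strict_right_mono) auto
  also have "\<dots> = (L * t) * (t * (a + t))" by (simp add: power2_eq_square)
  also have "\<dots> \<le> a * (1 + a)"
  proof (rule mult_mono)
    show "t * (a + t) \<le> 1 + a" using assms mult_mono[of t 1 "a + t" "1 + a"] by simp
  qed (use \<open>L * t < a\<close> assms in auto)
  also have "\<dots> \<le> (1 - D) * (a + t) * (1 + a)"
    using \<open>(1 - D) * (a + t) > a\<close> assms by (intro mult_right_mono) auto
  finally show False by (simp add: algebra_simps)
qed

lemma second_moment_bound_optimized:
  fixes a D L mu s T :: real
  assumes "0 < mu" "mu \<le> 2 * L * s" "mu \<le> s + a" "0 < s" "1 \<le> L" "L * s \<le> T"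
    and second_moment: "\<And>lam. 2 * lam * T - lam\<^sup>2 * mu \<le> T + L * (L - 1) * D"
  shows "L * (s\<^sup>2 - D * (s + a)) \<le> (s - D) * (s + a)"
proof -
  \<comment> \<open>The optimal weight once \<open>T\<close> is replaced by its lower bound \<open>L * s\<close>.\<close>
  define lam where "lam = L * s / mu"
  have "1 \<le> 2 * lam" using assms(1,2) by (simp add: lam_def)
  then have "(2 * lam - 1) * (L * s) \<le> (2 * lam - 1) * T"
    using assms(6) by (intro mult_left_mono) auto
  with second_moment[of lam] have "(2 * lam - 1) * (L * s) - lam\<^sup>2 * mu \<le> L * ((L - 1) * D)"
    by (simp add: algebra_simps)
  also have "(2 * lam - 1) * (L * s) - lam\<^sup>2 * mu = L * (L * s\<^sup>2 / mu - s)"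
    using assms(1) by (simp add: lam_def field_simps power2_eq_square)
  finally have "L * s\<^sup>2 / mu - s \<le> (L - 1) * D"
    using assms(5) by (simp add: mult_le_cancel_left_pos)
  moreover have "L * (s\<^sup>2 / (s + a)) \<le> L * (s\<^sup>2 / mu)"
    using assms by (intro mult_left_mono divide_left_mono) auto
  ultimately have "L * (s\<^sup>2 / (s + a) - D) \<le> s - D" by (simp add: algebra_simps)
  then have "L * (s\<^sup>2 / (s + a) - D) * (s + a) \<le> (s - D) * (s + a)"
    using assms by (intro mult_right_mono) auto
  moreover have "L * (s\<^sup>2 / (s + a) - D) * (s + a) = L * (s\<^sup>2 - D * (s + a))"
    using assms(1,3) by (simp add: field_simps)
  ultimately show ?thesis by simp
qed

lemma list_size_bound_of_second_moment:
  fixes a t D L mu s T :: real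
  assumes "0 < t" "t \<le> 1" "0 \<le> a" "0 \<le> D" "0 < t\<^sup>2 - D * (a + t)"
    and "2 \<le> L" "0 < mu" "L * s \<le> T" "t \<le> s" "mu \<le> s + a"
    and "\<And>lam. 2 * lam * T - lam\<^sup>2 * mu \<le> T + L * (L - 1) * D"
  shows "L * (t\<^sup>2 - D * (a + t)) \<le> (1 - D) * (1 + a)"
proof (rule ccontr)
  define G where "G = t\<^sup>2 - D * (a + t)"
  define H where "H = s\<^sup>2 - D * (s + a)"
  assume "\<not> ?thesis"
  then have large: "(1 - D) * (1 + a) < L * G" by (simp add: G_def)
  have "a \<le> (2 * L - 1) * t"
    using insertion_rate_le_of_bound_violated assms(1-6) large by (simp add: G_def)
  moreover have "(2 * L - 1) * t \<le> (2 * L - 1) * s" using assms by (intro mult_left_mono) auto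
  ultimately have "mu \<le> 2 * L * s" using assms(10) by (simp add: algebra_simps)
  then have "L * H \<le> (s - D) * (s + a)"
    unfolding H_def using assms by (intro second_moment_bound_optimized) auto
  have ratio: "(s - D) * (s + a) * G \<le> (1 - D) * (1 + a) * H"
    unfolding G_def H_def using johnson_ratio_bound assms(1-5,9) by blast
  have "D < t" using assms(1,3,4,5) by (rule less_of_sq_sub_pos)
  have "0 < (s - D) * (s + a) * G" using \<open>D < t\<close> assms by (simp add: G_def)
  moreover have "0 \<le> (1 - D) * (1 + a)" using \<open>D < t\<close> assms by simp
  ultimately have "0 < H"
    using ratio by (metis linorder_not_less mult_nonneg_nonpos order_le_less_trans)
  then have "(1 - D) * (1 + a) * H < L * G * H" using large by simp
  also have "\<dots> = (L * H) * G" by simp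
  also have "\<dots> \<le> (s - D) * (s + a) * G"
    using \<open>L * H \<le> (s - D) * (s + a)\<close> assms(5) by (simp add: G_def mult_right_mono)
  finally show False using ratio by simp
qed

lemma sum_card_inter_le:
  fixes S :: "'b \<Rightarrow> 'c set" and K :: real
  assumes "finite B"
    and "\<And>c c'. c \<in> B \<Longrightarrow> c' \<in> B \<Longrightarrow> c \<noteq> c' \<Longrightarrow> real (card (S c \<inter> S c')) \<le> K"
  shows "(\<Sum>c\<in>B. \<Sum>c'\<in>B. real (card (S c \<inter> S c')))
           \<le> (\<Sum>c\<in>B. real (card (S c))) + real (card B) * (real (card B) - 1) * K"
proof -
  have "(\<Sum>c'\<in>B. real (card (S c \<inter> S c'))) \<le> real (card (S c)) + (real (card B) - 1) * K"
    if "c \<in> B" for c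
  proof -
    have "(\<Sum>c'\<in>B. real (card (S c \<inter> S c')))
            = real (card (S c)) + (\<Sum>c'\<in>B - {c}. real (card (S c \<inter> S c')))"
      using assms(1) that by (simp add: sum.remove)
    also have "(\<Sum>c'\<in>B - {c}. real (card (S c \<inter> S c'))) \<le> real (card (B - {c})) * K"
      using assms(2) that by (intro sum_bounded_above) auto
    also have "1 \<le> card B" using assms(1) that by (auto simp: Suc_le_eq card_gt_0_iff)
    then have "real (card (B - {c})) = real (card B) - 1"
      using assms(1) that by (simp add: card_Diff_singleton of_nat_diff)
    finally show ?thesis by simp
  qed
  then have "(\<Sum>c\<in>B. \<Sum>c'\<in>B. real (card (S c \<inter> S c')))
               \<le> (\<Sum>c\<in>B. real (card (S c)) + (real (card B) - 1) * K)"
    by (rule sum_mono)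
  then show ?thesis by (simp add: sum.distrib)
qed

lemma second_moment_inequality:
  fixes S :: "'b \<Rightarrow> nat set" and K lam :: real
  assumes "finite B" and "\<And>c. c \<in> B \<Longrightarrow> S c \<subseteq> {..<m}"
    and "\<And>c c'. c \<in> B \<Longrightarrow> c' \<in> B \<Longrightarrow> c \<noteq> c' \<Longrightarrow> real (card (S c \<inter> S c')) \<le> K"
  shows "2 * lam * (\<Sum>c\<in>B. real (card (S c))) - lam\<^sup>2 * real m
           \<le> (\<Sum>c\<in>B. real (card (S c))) + real (card B) * (real (card B) - 1) * K"
proof -
  define r :: "nat \<Rightarrow> real" where "r x = (\<Sum>c\<in>B. of_bool (x \<in> S c))" for x
  have sum_indicator: "(\<Sum>x<m. of_bool (x \<in> A)) = real (card A)" if "A \<subseteq> {..<m}" for A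
  proof -
    have "{..<m} \<inter> {x. x \<in> A} = A" using that by blast
    then show ?thesis by simp
  qed
  have sum_r: "(\<Sum>x<m. r x) = (\<Sum>c\<in>B. real (card (S c)))"
    unfolding r_def using assms(2) by (subst sum.swap) (intro sum.cong HOL.refl sum_indicator, blast)
  have "(\<Sum>x<m. (r x)\<^sup>2) = (\<Sum>c\<in>B. \<Sum>c'\<in>B. \<Sum>x<m. of_bool (x \<in> S c \<inter> S c'))"
    unfolding r_def power2_eq_square sum_product
    by (subst sum.swap, rule sum.cong[OF HOL.refl], subst sum.swap) (simp add: of_bool_conj)
  also have "\<dots> = (\<Sum>c\<in>B. \<Sum>c'\<in>B. real (card (S c \<inter> S c')))"
    using assms(2) by (intro sum.cong HOL.refl sum_indicator) blast
  finally have sum_r_sq: "(\<Sum>x<m. (r x)\<^sup>2) = (\<Sum>c\<in>B. \<Sum>c'\<in>B. real (card (S c \<inter> S c')))" .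
  have "0 \<le> (\<Sum>x<m. (r x - lam)\<^sup>2)" by (intro sum_nonneg) auto
  also have "\<dots> = (\<Sum>x<m. (r x)\<^sup>2) - 2 * lam * (\<Sum>x<m. r x) + lam\<^sup>2 * real m"
    by (simp add: power2_diff sum.distrib sum_subtractf sum_distrib_left algebra_simps)
  finally show ?thesis
    using sum_card_inter_le[where S = S and K = K, OF assms(1,3)] unfolding sum_r sum_r_sq by linarith
qed

lemma list_size_bound_of_position_sets:
  fixes S :: "'b \<Rightarrow> nat set" and t a D :: real
  assumes "finite B" "2 \<le> card B" "0 < n"
    and "0 < t" "t \<le> 1" "0 \<le> a" "0 < t\<^sup>2 - D * (a + t)"
    and sub: "\<And>c. c \<in> B \<Longrightarrow> S c \<subseteq> {..<m}"
    and large: "\<And>c. c \<in> B \<Longrightarrow> real n * t \<le> real (card (S c))"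
    and covering: "\<And>c. c \<in> B \<Longrightarrow> real m \<le> real (card (S c)) + real n * a"
    and inter: "\<And>c c'. c \<in> B \<Longrightarrow> c' \<in> B \<Longrightarrow> c \<noteq> c' \<Longrightarrow> real (card (S c \<inter> S c')) \<le> real n * D"
  shows "real (card B) * (t\<^sup>2 - D * (a + t)) \<le> (1 - D) * (1 + a)"
proof -
  obtain c1 c2 where c12: "c1 \<in> B" "c2 \<in> B" "c1 \<noteq> c2"
    using assms(2) card_le_Suc0_iff_eq[OF assms(1)] by auto
  have "0 \<le> real n * D" using inter[OF c12] by linarith
  then have "0 \<le> D" using assms(3) by (simp add: zero_le_mult_iff)
  have "0 < real n * t" using assms(3,4) by simp
  then have "S c1 \<noteq> {}" using large[OF c12(1)] by auto
  then have "0 < m" using sub[OF c12(1)] by auto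
  define s where "s = max t (real m / real n - a)"
  define T where "T = (\<Sum>c\<in>B. real (card (S c)))"
  have "real n * (real m / real n - a) = real m - real n * a"
    using assms(3) by (simp add: field_simps)
  then have "real n * s \<le> real (card (S c))" if "c \<in> B" for c
    using large[OF that] covering[OF that] by (simp add: s_def max_def)
  then have "real (card B) * (real n * s) \<le> T"
    unfolding T_def by (metis sum_bounded_below)
  then have "real (card B) * s \<le> T / real n"
    using assms(3) by (simp add: field_simps)
  moreover have "2 * lam * (T / real n) - lam\<^sup>2 * (real m / real n)
                   \<le> T / real n + real (card B) * (real (card B) - 1) * D" for lam
  proof -
    have "2 * lam * T - lam\<^sup>2 * real m \<le> T + real (card B) * (real (card B) - 1) * (real n * D)"
      unfolding T_def using assms(1) sub inter by (rule second_moment_inequality)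
    then have "(2 * lam * T - lam\<^sup>2 * real m) / real n
                 \<le> (T + real (card B) * (real (card B) - 1) * (real n * D)) / real n"
      by (simp add: divide_right_mono)
    then show ?thesis using assms(3) by (simp add: field_simps)
  qed
  ultimately show ?thesis
    using assms(2-7) \<open>0 \<le> D\<close> \<open>0 < m\<close>
    by (intro list_size_bound_of_second_moment[where s = s and mu = "real m / real n" and T = "T / real n"])
       (auto simp: s_def)
qed

lemma card_lev_ball_inter_code_le:
  fixes C :: "'a list set" and tauI tauD \<delta> :: real
  defines "G \<equiv> (1 - tauD)\<^sup>2 - (1 - \<delta>) * (tauI + (1 - tauD))"
  assumes "finite C" "C \<subseteq> {x. length x = n}" "0 < n"
    and dist: "\<And>c c'. c \<in> C \<Longrightarrow> c' \<in> C \<Longrightarrow> c \<noteq> c' \<Longrightarrow> 2 * \<delta> * real n \<le> real (lev_dist c c')"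
    and "real tI \<le> tauI * real n" "real tD \<le> tauD * real n"
    and "0 \<le> tauI" "0 \<le> tauD" "tauD < 1" "0 \<le> \<delta>" "0 < G"
  shows "real (card (lev_ball v tD tI \<inter> C)) * G \<le> \<delta> * (1 + tauI)"
proof (cases "card (lev_ball v tD tI \<inter> C) \<le> 1")
  case True
  have "tauD * tauD \<le> tauD" "0 \<le> \<delta> * tauD"
    using assms(9-11) by (simp_all add: mult_left_le)
  then have "G \<le> \<delta> * (1 + tauI)"
    using assms(8) unfolding G_def by (simp add: algebra_simps power2_eq_square)
  moreover have "real (card (lev_ball v tD tI \<inter> C)) * G \<le> 1 * G"
    using True \<open>0 < G\<close> by (intro mult_right_mono) auto
  ultimately show ?thesis by simp
next
  case False
  define B where "B = lev_ball v tD tI \<inter> C"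
  have "\<exists>S. S \<subseteq> {..<length v} \<and> subseq (nths v S) c
               \<and> length c \<le> card S + tD \<and> length v \<le> card S + tI" if "c \<in> B" for c
  proof -
    from that have "c \<in> lev_ball v tD tI" by (simp add: B_def)
    then obtain S where "S \<subseteq> {..<length v}" "subseq (nths v S) c"
      "length c \<le> card S + tD" "length v \<le> card S + tI"
      by (rule lev_ball_positions)
    then show ?thesis by blast
  qed
  then obtain S where S: "\<And>c. c \<in> B \<Longrightarrow> S c \<subseteq> {..<length v} \<and> subseq (nths v (S c)) c
                  \<and> length c \<le> card (S c) + tD \<and> length v \<le> card (S c) + tI"
    by metis
  have length_B: "c \<in> B \<Longrightarrow> length c = n" for c using assms(3) by (auto simp: B_def)
  have "real (card B) * ((1 - tauD)\<^sup>2 - (1 - \<delta>) * (tauI + (1 - tauD))) \<le> (1 - (1 - \<delta>)) * (1 + tauI)"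
  proof (rule list_size_bound_of_position_sets[where S = S and m = "length v" and n = n])
    show "finite B" "2 \<le> card B" using assms(2) False by (simp_all add: B_def)
    show "0 < n" "0 < 1 - tauD" "1 - tauD \<le> 1" "0 \<le> tauI"
      "0 < (1 - tauD)\<^sup>2 - (1 - \<delta>) * (tauI + (1 - tauD))"
      using assms(4,8-10,12) by (simp_all add: G_def)
  next
    fix c assume c: "c \<in> B"
    then show "S c \<subseteq> {..<length v}" using S by blast
    have "real n \<le> real (card (S c)) + real tD" "real (length v) \<le> real (card (S c)) + real tI"
      using S[OF c] length_B[OF c] by linarith+
    then show "real n * (1 - tauD) \<le> real (card (S c))"
      "real (length v) \<le> real (card (S c)) + real n * tauI"
      using assms(6,7) by (simp_all add: algebra_simps)
  next
    fix c c' assume "c \<in> B" "c' \<in> B" "c \<noteq> c'"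
    then have "lev_dist c c' + 2 * card (S c \<inter> S c') \<le> 2 * n"
      using S length_B by (intro lev_dist_add_card_inter_le) auto
    then have "real (lev_dist c c') + 2 * real (card (S c \<inter> S c')) \<le> 2 * real n"
      by linarith
    moreover have "2 * \<delta> * real n \<le> real (lev_dist c c')"
      using dist \<open>c \<in> B\<close> \<open>c' \<in> B\<close> \<open>c \<noteq> c'\<close> by (simp add: B_def)
    ultimately show "real (card (S c \<inter> S c')) \<le> real n * (1 - \<delta>)"
      by (simp add: algebra_simps)
  qed
  then show ?thesis by (simp add: B_def G_def)
qed

lemma length_pos_of_two_le_card:
  assumes "C \<subseteq> {x. length x = n}" "2 \<le> card C"
  shows "0 < n"
proof (rule ccontr)
  assume "\<not> 0 < n"
  then have "C \<subseteq> {[]}" using assms(1) by auto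
  with assms(2) show False using card_mono[of "{[]}" C] by simp
qed

lemma delta_ID_nonneg: "0 \<le> tauI \<Longrightarrow> 0 \<le> tauD \<Longrightarrow> tauD < 1 \<Longrightarrow> 0 \<le> delta_ID tauI tauD"
  unfolding delta_ID_def by simp

lemma delta_ID_gap_eq:
  assumes "tauI + 1 - tauD \<noteq> 0"
  shows "(\<delta> - delta_ID tauI tauD) * (tauI + 1 - tauD) = (1 - tauD)\<^sup>2 - (1 - \<delta>) * (tauI + (1 - tauD))"
  using assms unfolding delta_ID_def by (simp add: field_simps power2_eq_square)

theorem mainTheorem4:
  fixes tauI tauD \<delta> :: real and n :: nat and C :: "('a::finite) list set"
  assumes "0 \<le> tauI" and "0 \<le> tauD" and "tauD < 1"
    and "C \<subseteq> {x. length x = n}" and "card C \<ge> 2"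
    and "real (min_lev_dist C) = 2 * \<delta> * real n"
    and "\<delta> > delta_ID tauI tauD"
  shows "list_decodable C (nat \<lfloor>tauI * real n\<rfloor>) (nat \<lfloor>tauD * real n\<rfloor>)
           (nat \<lfloor>\<delta> * (tauI + 1) / ((\<delta> - delta_ID tauI tauD) * (tauI + 1 - tauD))\<rfloor>)"
proof -
  define G where "G = (\<delta> - delta_ID tauI tauD) * (tauI + 1 - tauD)"
  have "0 < tauI + 1 - tauD" using assms(1,3) by simp
  then have "0 < G" using assms(7) by (simp add: G_def)
  have G_eq: "G = (1 - tauD)\<^sup>2 - (1 - \<delta>) * (tauI + (1 - tauD))"
    using \<open>0 < tauI + 1 - tauD\<close> delta_ID_gap_eq by (simp add: G_def)
  have "0 \<le> \<delta>" using delta_ID_nonneg[OF assms(1-3)] assms(7) by linarith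
  have "finite C"
    using assms(4) finite_lists_length_eq[of "UNIV :: 'a set" n] by (auto intro: finite_subset)
  have "0 < n" using assms(4,5) by (rule length_pos_of_two_le_card)
  have "real (card (lev_ball v (nat \<lfloor>tauD * real n\<rfloor>) (nat \<lfloor>tauI * real n\<rfloor>) \<inter> C)) * G
          \<le> \<delta> * (1 + tauI)" for v
    unfolding G_eq
  proof (rule card_lev_ball_inter_code_le[OF \<open>finite C\<close> assms(4) \<open>0 < n\<close>])
    fix c c' assume "c \<in> C" "c' \<in> C" "c \<noteq> c'"
    then show "2 * \<delta> * real n \<le> real (lev_dist c c')"
      using min_lev_dist_le[OF \<open>finite C\<close>] assms(6) by (metis of_nat_le_iff)
  qed (use assms(1-3) \<open>0 \<le> \<delta>\<close> \<open>0 < G\<close> G_eq in auto)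
  then show ?thesis
    unfolding list_decodable_def G_def[symmetric] using \<open>0 < G\<close>
    by (auto intro!: le_nat_floor simp: pos_le_divide_eq algebra_simps)
qed

end
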